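(* Let $q(x)\in\mathbb{Z}[i][x]$ be an intersective polynomial of degree $d$, with fixed roots $z_{\mathfrak p}=(s_{\mathfrak p^n})_{n\ge1}\in\mathbb{Z}[i]_{\mathfrak p}$ of multiplicity $m_{\mathfrak p}$ for each nonzero prime ideal $\mathfrak p$. Let $\mathfrak a$ be a nonzero proper ideal of $\mathbb{Z}[i]$ with generator $\alpha$, let $\gamma$ be a generator of $\lambda_q(\mathfrak a)$, and let $r_{\mathfrak a}\in\mathbb{Z}[i]$ satisfy: $|r_{\mathfrak a}|\le 2|\alpha|$, $q(r_{\mathfrak a})\in\mathfrak a$, and $r_{\mathfrak a}\equiv s_{\mathfrak p^n}\pmod{\mathfrak p^n}$ whenever $\mathfrak a\subseteq\mathfrak p^n$. Then all coefficients of $q(r_{\mathfrak a}+\alpha x)$ lie in $\lambda_q(\mathfrak a)$, and the polynomial $q_{\mathfrak a}(x) := q(r_{\mathfrak a}+\alpha x)/\gamma\in\mathbb{Z}[i][x]$ is an intersective polynomial of degree $d$ satisfying $M_{q_{\mathfrak a}}\le 2^{2d}|\alpha|^{d-1}M_q$.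
   Context: A polynomial $h(x)\in\mathbb{Z}[i][x]$ is intersective if for every nonzero $\alpha\in\mathbb{Z}[i]$ there is $z\in\mathbb{Z}[i]$ with $\alpha\mid h(z)$; equivalently, $h$ has a root in $\mathbb{Z}[i]_{\mathfrak p}$ for every nonzero prime ideal $\mathfrak p$. Here $\mathbb{Z}[i]_{\mathfrak p} := \varprojlim_n \mathbb{Z}[i]/\mathfrak p^n$, elements written as compatible sequences $(s_{\mathfrak p^n})_{n\ge1}$. Let $\widetilde J$ be the set of nonzero proper ideals of $\mathbb{Z}[i]$; $\lambda_q:\widetilde J\to\widetilde J$ is the completely multiplicative map with $\lambda_q(\mathfrak p) = \mathfrak p^{m_{\mathfrak p}}$ for each nonzero prime ideal $\mathfrak p$, where $m_{\mathfrak p}$ is the multiplicity of the fixed root $z_{\mathfrak p}$. For $p(x)=a_dx^d+\dots+a_0\in\mathbb{C}[x]$ with $a_d\ne0$, $M_p := 2\max\{|a_0|,\dots,|a_d|\}$. *)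

theory Defs
  imports "HOL-Computational_Algebra.Polynomial" Complex_Main
begin

definition ZI :: "complex set" where
  "ZI = {z. Re z \<in> \<int> \<and> Im z \<in> \<int>}"

definition gdvd :: "complex \<Rightarrow> complex \<Rightarrow> bool" where
  "gdvd a b \<longleftrightarrow> (\<exists>c\<in>ZI. b = a * c)"

definition gideal :: "complex set \<Rightarrow> bool" where
  "gideal I \<longleftrightarrow> I \<subseteq> ZI \<and> 0 \<in> I \<and> (\<forall>x\<in>I. \<forall>y\<in>I. x + y \<in> I)
      \<and> (\<forall>x\<in>I. \<forall>r\<in>ZI. r * x \<in> I)"

definition principal :: "complex \<Rightarrow> complex set" where
  "principal a = {a * x | x. x \<in> ZI}"

definition ideal_gen :: "complex set \<Rightarrow> complex set" where
  "ideal_gen S = \<Inter>{I. gideal I \<and> S \<subseteq> I}"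

definition ideal_mult :: "complex set \<Rightarrow> complex set \<Rightarrow> complex set" where
  "ideal_mult I J = ideal_gen {a * b | a b. a \<in> I \<and> b \<in> J}"

primrec ideal_pow :: "complex set \<Rightarrow> nat \<Rightarrow> complex set" where
  "ideal_pow I 0 = ZI"
| "ideal_pow I (Suc n) = ideal_mult I (ideal_pow I n)"

definition nzp_ideal :: "complex set \<Rightarrow> bool" where
  "nzp_ideal I \<longleftrightarrow> gideal I \<and> I \<noteq> {0} \<and> I \<noteq> ZI"

definition nz_prime_ideal :: "complex set \<Rightarrow> bool" where
  "nz_prime_ideal P \<longleftrightarrow> nzp_ideal P \<and> (\<forall>a\<in>ZI. \<forall>b\<in>ZI. a * b \<in> P \<longrightarrow> a \<in> P \<or> b \<in> P)"

definition ZI_poly :: "complex poly \<Rightarrow> bool" where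
  "ZI_poly h \<longleftrightarrow> (\<forall>k. coeff h k \<in> ZI)"

definition intersective :: "complex poly \<Rightarrow> bool" where
  "intersective h \<longleftrightarrow> ZI_poly h \<and>
     (\<forall>a\<in>ZI. a \<noteq> 0 \<longrightarrow> (\<exists>z\<in>ZI. gdvd a (poly h z)))"

text \<open>An element of the completion Z[i]_P, given as a sequence s of representatives
  (s n represents the component in Z[i]/P^n, n \<ge> 1), compatible.\<close>
definition padic_elem :: "complex set \<Rightarrow> (nat \<Rightarrow> complex) \<Rightarrow> bool" where
  "padic_elem P s \<longleftrightarrow> (\<forall>n\<ge>1. s n \<in> ZI) \<and>
     (\<forall>n\<ge>1. s (Suc n) - s n \<in> ideal_pow P n)"

definition padic_root :: "complex poly \<Rightarrow> complex set \<Rightarrow> (nat \<Rightarrow> complex) \<Rightarrow> bool" where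
  "padic_root h P s \<longleftrightarrow> padic_elem P s \<and> (\<forall>n\<ge>1. poly h (s n) \<in> ideal_pow P n)"

text \<open>Multiplicity of the root z = (s n) in Z[i]_P: the least k such that the k-th Taylor
  coefficient of h at z (coefficient of (x - z)^k in h) is nonzero in Z[i]_P. Its image in
  Z[i]/P^n is the k-th coefficient of h(x + s n).\<close>
definition root_mult :: "complex poly \<Rightarrow> complex set \<Rightarrow> (nat \<Rightarrow> complex) \<Rightarrow> nat" where
  "root_mult h P s = (LEAST k. \<not> (\<forall>n\<ge>1. coeff (pcompose h [:s n, 1:]) k \<in> ideal_pow P n))"

definition Mp :: "complex poly \<Rightarrow> real" where
  "Mp p = 2 * Max ((\<lambda>i. cmod (coeff p i)) ` {..degree p})"

end

theory Submission
  imports Defs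
begin

text \<open>
  Let \<open>f(x) = q(r + \<alpha>x)\<close> and let \<open>p\<^sup>e\<close> divide \<open>\<alpha>\<close> for a prime \<open>p\<close>. Expanding \<open>q\<close> around
  the approximation \<open>t = s\<^sub>N\<close> of its \<open>p\<close>-adic root, the first \<open>m\<^sub>p\<close> Taylor coefficients of \<open>q\<close>
  at \<open>t\<close> are divisible by \<open>p\<^sup>N\<close>, while every other term of \<open>f\<close> carries at least \<open>m\<^sub>p\<close> factors
  \<open>\<alpha>\<close> or \<open>r - t\<close>, each divisible by \<open>p\<^sup>e\<close>; so p^(m_p e) divides all coefficients of \<open>f\<close>.
  As \<open>\<lambda>\<^sub>q\<close> is multiplicative with \<open>\<lambda>\<^sub>q\<close>(p^e) = p^(m_p e), combining the coprime prime-power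
  parts of \<open>\<alpha>\<close> shows that \<open>\<gamma>\<close> divides every coefficient of \<open>f\<close> and that \<open>\<alpha>\<close> divides \<open>\<gamma>\<close>.
  Modulo \<open>p\<^sup>E\<close> the congruence \<open>r + \<alpha>z \<equiv> s\<^sub>N\<close> is solvable for large \<open>N\<close>, because \<open>r\<close> already
  agrees with \<open>s\<^sub>N\<close> modulo the \<open>p\<close>-part of \<open>\<alpha>\<close>; the Chinese remainder theorem glues these local
  roots, so \<open>f\<close> and then \<open>f/\<gamma>\<close> are intersective. The bound on \<open>M\<close> comes from \<open>|r| \<le> 2|\<alpha>|\<close>,
  the binomial expansion of \<open>(r + \<alpha>x)\<^sup>i\<close> and \<open>|\<alpha>| \<le> |\<gamma>|\<close>.
\<close>

section \<open>Arithmetic of the Gaussian integers\<close>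

lemma ZI_0 [simp]: "0 \<in> ZI" and ZI_1 [simp]: "1 \<in> ZI" and ZI_of_nat [simp]: "of_nat n \<in> ZI"
  by (auto simp: ZI_def)

lemma ZI_add [simp]: "a \<in> ZI \<Longrightarrow> b \<in> ZI \<Longrightarrow> a + b \<in> ZI"
  and ZI_diff [simp]: "a \<in> ZI \<Longrightarrow> b \<in> ZI \<Longrightarrow> a - b \<in> ZI"
  and ZI_uminus [simp]: "a \<in> ZI \<Longrightarrow> - a \<in> ZI"
  and ZI_mult [simp]: "a \<in> ZI \<Longrightarrow> b \<in> ZI \<Longrightarrow> a * b \<in> ZI"
  by (auto simp: ZI_def)

lemma ZI_power [simp]: "a \<in> ZI \<Longrightarrow> a ^ n \<in> ZI"
  by (induction n) auto

lemma ZI_sum [simp]: "(\<And>x. x \<in> S \<Longrightarrow> f x \<in> ZI) \<Longrightarrow> sum f S \<in> ZI"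
  by (induction S rule: infinite_finite_induct) auto

lemma norm_ge_1_if_ZI:
  assumes "z \<in> ZI" "z \<noteq> 0" shows "1 \<le> cmod z"
proof -
  from assms(1) obtain a b :: int where ab: "Re z = a" "Im z = b"
    by (auto simp: ZI_def elim!: Ints_cases)
  with assms(2) have "a \<noteq> 0 \<or> b \<noteq> 0"
    by (auto simp: complex_eq_iff)
  then have "1 \<le> a\<^sup>2 + b\<^sup>2"
    by (simp add: int_one_le_iff_zero_less sum_power2_gt_zero_iff)
  then show ?thesis
    by (simp add: norm_complex_def ab flip: of_int_power of_int_add)
qed

definition gnorm :: "complex \<Rightarrow> nat" where
  "gnorm z = nat \<lfloor>(cmod z)\<^sup>2\<rfloor>"

lemma gnorm_less:
  assumes "a \<in> ZI" "b \<in> ZI" "cmod a < cmod b" shows "gnorm a < gnorm b"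
proof -
  have "real (gnorm z) = (cmod z)\<^sup>2" if "z \<in> ZI" for z
    using that by (auto simp: gnorm_def ZI_def cmod_power2 elim!: Ints_cases)
  with assms have "real (gnorm a) < real (gnorm b)"
    by (simp add: power_strict_mono)
  then show ?thesis
    by simp
qed

lemma ZI_least_norm:
  assumes "x \<in> S" "S \<subseteq> ZI" shows "\<exists>m\<in>S. \<forall>y\<in>S. cmod m \<le> cmod y"
proof -
  obtain m where m: "m \<in> S" "\<And>y. y \<in> S \<Longrightarrow> gnorm m \<le> gnorm y"
    using ex_has_least_nat[of "\<lambda>y. y \<in> S" x gnorm] assms(1) by blast
  have "cmod m \<le> cmod y" if "y \<in> S" for y
    using m gnorm_less[of y m] that assms(2) by force
  with m(1) show ?thesis
    by blast
qed

lemma gdvd_refl [simp]: "gdvd a a"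
  unfolding gdvd_def by (metis ZI_1 mult_1_right)

lemma gdvd_0 [simp]: "gdvd a 0"
  unfolding gdvd_def by (metis ZI_0 mult_zero_right)

lemma gdvd_0_left_iff [simp]: "gdvd 0 b \<longleftrightarrow> b = 0"
  unfolding gdvd_def by (metis ZI_0 mult_zero_left)

lemma one_gdvd_iff [simp]: "gdvd 1 b \<longleftrightarrow> b \<in> ZI"
  unfolding gdvd_def by simp

lemma gdvd_triv_left [simp]: "x \<in> ZI \<Longrightarrow> gdvd a (a * x)"
  and gdvd_triv_right [simp]: "x \<in> ZI \<Longrightarrow> gdvd a (x * a)"
  unfolding gdvd_def by (blast, metis mult.commute)

lemma gdvd_trans: "gdvd a b \<Longrightarrow> gdvd b c \<Longrightarrow> gdvd a c"
  unfolding gdvd_def by (metis ZI_mult mult.assoc)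

lemma gdvd_ZI: "a \<in> ZI \<Longrightarrow> gdvd a b \<Longrightarrow> b \<in> ZI"
  unfolding gdvd_def by auto

lemma gdvd_add [intro]: "gdvd a b \<Longrightarrow> gdvd a c \<Longrightarrow> gdvd a (b + c)"
  and gdvd_diff [intro]: "gdvd a b \<Longrightarrow> gdvd a c \<Longrightarrow> gdvd a (b - c)"
  unfolding gdvd_def by (metis ZI_add distrib_left, metis ZI_diff right_diff_distrib)

lemma gdvd_mult2 [intro]: "gdvd a b \<Longrightarrow> x \<in> ZI \<Longrightarrow> gdvd a (b * x)"
  and gdvd_mult [intro]: "gdvd a b \<Longrightarrow> x \<in> ZI \<Longrightarrow> gdvd a (x * b)"
  unfolding gdvd_def by (metis ZI_mult mult.assoc, metis ZI_mult mult.left_commute)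

lemma mult_gdvd_mono: "gdvd a b \<Longrightarrow> gdvd c d \<Longrightarrow> gdvd (a * c) (b * d)"
  unfolding gdvd_def by (metis ZI_mult mult.assoc mult.left_commute)

lemma gdvd_power_same: "gdvd a b \<Longrightarrow> gdvd (a ^ n) (b ^ n)"
  by (induction n) (auto intro: mult_gdvd_mono)

lemma le_imp_power_gdvd: "a \<in> ZI \<Longrightarrow> m \<le> n \<Longrightarrow> gdvd (a ^ m) (a ^ n)"
  by (metis ZI_power gdvd_triv_left le_add_diff_inverse power_add)

lemma gdvd_sum: "(\<And>x. x \<in> S \<Longrightarrow> gdvd a (f x)) \<Longrightarrow> gdvd a (sum f S)"
  by (induction S rule: infinite_finite_induct) auto

lemma gdvd_norm_le:
  assumes "gdvd a b" "b \<noteq> 0" shows "cmod a \<le> cmod b"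
proof -
  from assms obtain c where "c \<in> ZI" "b = a * c" "c \<noteq> 0"
    by (auto simp: gdvd_def)
  then show ?thesis
    by (simp add: norm_mult mult_le_cancel_left1 norm_ge_1_if_ZI)
qed

definition gunit :: "complex \<Rightarrow> bool" where
  "gunit u \<longleftrightarrow> gdvd u 1"

lemma gunit_gdvd: "gunit u \<Longrightarrow> b \<in> ZI \<Longrightarrow> gdvd u b"
  unfolding gunit_def by (metis gdvd_mult2 mult_1)

lemma gunit_iff_norm_eq_1:
  assumes "u \<in> ZI" shows "gunit u \<longleftrightarrow> cmod u = 1"
proof
  assume "gunit u"
  then obtain c where c: "c \<in> ZI" "1 = u * c"
    by (auto simp: gunit_def gdvd_def)
  then have "u \<noteq> 0" "c \<noteq> 0"
    by auto
  with assms c(1) have "1 \<le> cmod u" "1 \<le> cmod c"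
    by (simp_all add: norm_ge_1_if_ZI)
  moreover have "cmod u * cmod c = 1"
    by (metis c(2) norm_mult norm_one)
  moreover have "cmod u \<le> cmod u * cmod c"
    using \<open>1 \<le> cmod c\<close> by (simp add: mult_le_cancel_left1)
  ultimately show "cmod u = 1"
    by linarith
next
  assume "cmod u = 1"
  then have "1 = u * cnj u"
    using complex_norm_square[of u] by simp
  moreover have "cnj u \<in> ZI"
    using assms by (simp add: ZI_def)
  ultimately show "gunit u"
    unfolding gunit_def gdvd_def by blast
qed

lemma norm_gt_1_if_nonunit: "u \<in> ZI \<Longrightarrow> u \<noteq> 0 \<Longrightarrow> \<not> gunit u \<Longrightarrow> 1 < cmod u"
  using norm_ge_1_if_ZI gunit_iff_norm_eq_1 by force

lemma norm_less_mult_nonunit: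
  assumes "a \<in> ZI" "a \<noteq> 0" "\<not> gunit a" "b \<noteq> 0" shows "cmod b < cmod (a * b)"
  using norm_gt_1_if_nonunit[OF assms(1-3)] assms(4) by (simp add: norm_mult)

lemma gunit_mult_iff:
  assumes "a \<in> ZI" "b \<in> ZI" shows "gunit (a * b) \<longleftrightarrow> gunit a \<and> gunit b"
proof
  assume "gunit (a * b)"
  moreover have "gdvd a (a * b)" "gdvd b (a * b)"
    using assms by simp_all
  ultimately show "gunit a \<and> gunit b"
    unfolding gunit_def using gdvd_trans by blast
next
  assume "gunit a \<and> gunit b"
  then show "gunit (a * b)"
    unfolding gunit_def using mult_gdvd_mono[of a 1 b 1] by simp
qed

lemma not_gdvd_large_power:
  assumes "p \<in> ZI" "p \<noteq> 0" "\<not> gunit p" "x \<noteq> 0" shows "\<exists>n. \<not> gdvd (p ^ n) x"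
proof -
  obtain n where "cmod x < cmod p ^ n"
    using real_arch_pow[OF norm_gt_1_if_nonunit[OF assms(1-3)]] by blast
  then have "\<not> gdvd (p ^ n) x"
    using gdvd_norm_le[OF _ assms(4)] by (force simp: norm_power)
  then show ?thesis ..
qed

lemma ZI_division:
  assumes "a \<in> ZI" "b \<in> ZI" "b \<noteq> 0" shows "\<exists>q\<in>ZI. cmod (a - b * q) < cmod b"
proof -
  define w where "w = a / b"
  define q where "q = Complex (round (Re w)) (round (Im w))"
  have "(cmod (w - q))\<^sup>2 = (Re w - round (Re w))\<^sup>2 + (Im w - round (Im w))\<^sup>2"
    by (simp add: q_def cmod_power2)
  also have "\<dots> \<le> (1/2)\<^sup>2 + (1/2)\<^sup>2"
    using of_int_round_abs_le[of "Re w"] of_int_round_abs_le[of "Im w"]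
    by (intro add_mono; subst abs_le_square_iff[symmetric]) (simp_all add: abs_minus_commute)
  finally have "(cmod (w - q))\<^sup>2 < 1\<^sup>2"
    by (simp add: power2_eq_square)
  then have "cmod (w - q) < 1"
    by (rule power_less_imp_less_base) simp
  moreover have "a - b * q = b * (w - q)"
    using assms(3) by (simp add: w_def algebra_simps)
  ultimately have "cmod (a - b * q) < cmod b"
    using assms(3) by (simp add: norm_mult)
  moreover have "q \<in> ZI"
    by (simp add: q_def ZI_def)
  ultimately show ?thesis
    by blast
qed

lemma ZI_bezout:
  assumes "a \<in> ZI" "b \<in> ZI"
  shows "\<exists>d\<in>ZI. gdvd d a \<and> gdvd d b \<and> (\<exists>u\<in>ZI. \<exists>v\<in>ZI. u * a + v * b = d)"
proof (cases "a = 0 \<and> b = 0")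
  case True
  then have "gdvd 0 a \<and> gdvd 0 b \<and> 0 * a + 0 * b = 0"
    by simp
  then show ?thesis
    by (metis ZI_0)
next
  case False
  define L where "L = {u * a + v * b | u v. u \<in> ZI \<and> v \<in> ZI}"
  have L_ZI: "L \<subseteq> ZI"
    using assms by (auto simp: L_def)
  have "a = 1 * a + 0 * b" "b = 0 * a + 1 * b"
    by simp_all
  then have a_L: "a \<in> L" and b_L: "b \<in> L"
    unfolding L_def using ZI_0 ZI_1 by blast+
  have L_diff: "x - d * t \<in> L" if "x \<in> L" "d \<in> L" "t \<in> ZI" for x d t
  proof -
    from that obtain u v u' v' where "u \<in> ZI" "v \<in> ZI" "x = u * a + v * b"
        "u' \<in> ZI" "v' \<in> ZI" "d = u' * a + v' * b"
      by (auto simp: L_def)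
    then have "x - d * t = (u - u' * t) * a + (v - v' * t) * b"
              "u - u' * t \<in> ZI" "v - v' * t \<in> ZI"
      using \<open>t \<in> ZI\<close> by (simp_all add: algebra_simps)
    then show ?thesis
      unfolding L_def by blast
  qed
  from False a_L b_L have "L - {0} \<noteq> {}"
    by blast
  then obtain d where d: "d \<in> L" "d \<noteq> 0" and d_min: "\<And>y. y \<in> L - {0} \<Longrightarrow> cmod d \<le> cmod y"
    using ZI_least_norm[of _ "L - {0}"] L_ZI by blast
  have "gdvd d x" if "x \<in> L" for x
  proof -
    have "x \<in> ZI" "d \<in> ZI"
      using that d(1) L_ZI by auto
    then obtain t where t: "t \<in> ZI" "cmod (x - d * t) < cmod d"
      using ZI_division d(2) by blast
    have "x - d * t \<in> L"
      by (rule L_diff[OF that d(1) t(1)])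
    with t d_min have "x - d * t = 0"
      by (meson DiffI leD singletonD)
    with t show ?thesis
      by simp
  qed
  moreover have "d \<in> ZI"
    using d L_ZI by blast
  moreover obtain u v where "u \<in> ZI" "v \<in> ZI" "u * a + v * b = d"
    using d by (auto simp: L_def)
  ultimately show ?thesis
    using a_L b_L by blast
qed

definition gcoprime :: "complex \<Rightarrow> complex \<Rightarrow> bool" where
  "gcoprime a b \<longleftrightarrow> (\<exists>u\<in>ZI. \<exists>v\<in>ZI. u * a + v * b = 1)"

lemma gcoprime_commute: "gcoprime a b \<longleftrightarrow> gcoprime b a"
  unfolding gcoprime_def by (metis add.commute)

lemma gcoprimeI:
  assumes "a \<in> ZI" "b \<in> ZI" and units: "\<And>d. d \<in> ZI \<Longrightarrow> gdvd d a \<Longrightarrow> gdvd d b \<Longrightarrow> gunit d"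
  shows "gcoprime a b"
proof -
  obtain d u v where "d \<in> ZI" "gdvd d a" "gdvd d b" "u \<in> ZI" "v \<in> ZI" "u * a + v * b = d"
    using ZI_bezout[OF assms(1,2)] by blast
  moreover from this obtain w where "w \<in> ZI" "1 = d * w"
    using units by (auto simp: gunit_def gdvd_def)
  ultimately have "(w * u) * a + (w * v) * b = 1" "w * u \<in> ZI" "w * v \<in> ZI"
    by (auto simp: algebra_simps)
  then show ?thesis
    unfolding gcoprime_def by blast
qed

lemma gcoprime_gdvd_right:
  assumes "gcoprime a b" "gdvd c b" shows "gcoprime a c"
proof -
  obtain u v t where "u \<in> ZI" "v \<in> ZI" "u * a + v * b = 1" "t \<in> ZI" "b = c * t"
    using assms by (auto simp: gcoprime_def gdvd_def)
  then have "u * a + (v * t) * c = 1" "v * t \<in> ZI"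
    by (simp_all add: ac_simps)
  with \<open>u \<in> ZI\<close> show ?thesis
    unfolding gcoprime_def by blast
qed

lemma gcoprime_power_left:
  assumes "gcoprime a b" "a \<in> ZI" "b \<in> ZI" shows "gcoprime (a ^ n) b"
proof (induction n)
  case 0
  show ?case
    unfolding gcoprime_def by (rule bexI[of _ 1], rule bexI[of _ 0]) simp_all
next
  case (Suc n)
  obtain u v where uv: "u \<in> ZI" "v \<in> ZI" "u * a + v * b = 1"
    using assms(1) by (auto simp: gcoprime_def)
  obtain u' v' where uv': "u' \<in> ZI" "v' \<in> ZI" "u' * a ^ n + v' * b = 1"
    using Suc.IH by (auto simp: gcoprime_def)
  have "(u' * a ^ n + v' * b) * (u * a + v * b) = 1"
    by (simp add: uv(3) uv'(3))
  then have "(u' * u) * a ^ Suc n + (u' * a ^ n * v + v' * (u * a + v * b)) * b = 1"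
    by (simp add: algebra_simps)
  moreover have "u' * u \<in> ZI" "u' * a ^ n * v + v' * (u * a + v * b) \<in> ZI"
    using uv uv' assms(2,3) by simp_all
  ultimately show ?case
    unfolding gcoprime_def by blast
qed

lemma gcoprime_gdvd_mult_cancel:
  assumes "gcoprime a b" "gdvd a (b * c)" "c \<in> ZI" shows "gdvd a c"
proof -
  obtain u v where uv: "u \<in> ZI" "v \<in> ZI" "u * a + v * b = 1"
    using assms(1) by (auto simp: gcoprime_def)
  have "c = (u * a + v * b) * c"
    by (simp add: uv(3))
  also have "\<dots> = a * (u * c) + v * (b * c)"
    by (simp add: algebra_simps)
  finally have c: "c = a * (u * c) + v * (b * c)" .
  have "gdvd a (a * (u * c))" "gdvd a (v * (b * c))"
    using uv assms(2,3) by auto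
  then show ?thesis
    by (subst c) (rule gdvd_add)
qed

lemma gcoprime_mult_gdvd:
  assumes "gcoprime a b" "gdvd a c" "gdvd b c" shows "gdvd (a * b) c"
proof -
  obtain u v where uv: "u \<in> ZI" "v \<in> ZI" "u * a + v * b = 1"
    using assms(1) by (auto simp: gcoprime_def)
  have "c = (u * a + v * b) * c"
    by (simp add: uv(3))
  also have "\<dots> = u * (a * c) + v * (c * b)"
    by (simp add: algebra_simps)
  finally have c: "c = u * (a * c) + v * (c * b)" .
  have "gdvd (a * b) (a * c)" "gdvd (a * b) (c * b)"
    using assms(2,3) by (auto intro: mult_gdvd_mono)
  then have "gdvd (a * b) (u * (a * c))" "gdvd (a * b) (v * (c * b))"
    using uv by auto
  then show ?thesis
    by (subst c) (rule gdvd_add)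
qed

definition gprime :: "complex \<Rightarrow> bool" where
  "gprime p \<longleftrightarrow> p \<in> ZI \<and> p \<noteq> 0 \<and> \<not> gunit p \<and>
     (\<forall>a\<in>ZI. \<forall>b\<in>ZI. gdvd p (a * b) \<longrightarrow> gdvd p a \<or> gdvd p b)"

lemma gprime_gcoprime:
  assumes p: "gprime p" and x: "x \<in> ZI" "\<not> gdvd p x" shows "gcoprime p x"
proof (rule gcoprimeI)
  show "p \<in> ZI" "x \<in> ZI"
    using p x by (simp_all add: gprime_def)
next
  fix d assume d: "d \<in> ZI" "gdvd d p" "gdvd d x"
  then obtain t where t: "t \<in> ZI" "p = d * t"
    by (auto simp: gdvd_def)
  have "\<not> gdvd p d"
    using d(3) x(2) gdvd_trans[of p d x] by blast
  moreover have "gdvd p (d * t)"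
    by (simp add: t(2)[symmetric])
  ultimately have "gdvd p t"
    using p d(1) t(1) unfolding gprime_def by blast
  then obtain t' where "t' \<in> ZI" "t = p * t'"
    by (auto simp: gdvd_def)
  with t(2) have "p * 1 = p * (d * t')"
    by (simp only: mult.left_commute mult_1_right)
  with p have "1 = d * t'"
    by (simp add: gprime_def)
  with \<open>t' \<in> ZI\<close> show "gunit d"
    unfolding gunit_def gdvd_def by blast
qed

lemma exists_gprime_gdvd:
  assumes b: "b \<in> ZI" "b \<noteq> 0" "\<not> gunit b" shows "\<exists>p. gprime p \<and> gdvd p b"
proof -
  define S where "S = {p \<in> ZI. \<not> gunit p \<and> gdvd p b}"
  have "b \<in> S" "S \<subseteq> ZI"
    using b by (auto simp: S_def)
  then obtain p where p: "p \<in> S" and p_min: "\<And>y. y \<in> S \<Longrightarrow> cmod p \<le> cmod y"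
    by (metis ZI_least_norm)
  then have pS: "p \<in> ZI" "\<not> gunit p" "gdvd p b" "p \<noteq> 0"
    using b(2) by (auto simp: S_def)
  have "gdvd p y" if xy: "x \<in> ZI" "y \<in> ZI" "gdvd p (x * y)" "\<not> gdvd p x" for x y
  proof -
    have "gcoprime p x"
    proof (rule gcoprimeI)
      fix d assume d: "d \<in> ZI" "gdvd d p" "gdvd d x"
      then obtain t where t: "t \<in> ZI" "p = t * d"
        by (auto simp: gdvd_def mult.commute)
      with pS(4) have "t \<noteq> 0" "d \<noteq> 0"
        by auto
      show "gunit d"
      proof (rule ccontr)
        assume "\<not> gunit d"
        with d(1) gdvd_trans[OF d(2) pS(3)] have "d \<in> S"
          by (simp add: S_def)
        then have "\<not> cmod d < cmod p"
          using p_min by (simp add: not_less)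
        then have "gunit t"
          using norm_less_mult_nonunit[of t d] t \<open>t \<noteq> 0\<close> \<open>d \<noteq> 0\<close> by auto
        then obtain w where "w \<in> ZI" "1 = t * w"
          by (auto simp: gunit_def gdvd_def)
        with t(2) have "d = p * w"
          by (metis mult.assoc mult.commute mult_1)
        with \<open>w \<in> ZI\<close> have "gdvd p d"
          by simp
        with d(3) xy(4) show False
          using gdvd_trans[of p d x] by blast
      qed
    qed (use pS xy in auto)
    with xy show ?thesis
      by (blast intro: gcoprime_gdvd_mult_cancel)
  qed
  with pS show ?thesis
    unfolding gprime_def by blast
qed

lemma gprime_power:
  assumes "gprime p" "e \<noteq> 0" shows "p ^ e \<in> ZI" "p ^ e \<noteq> 0" "\<not> gunit (p ^ e)"
proof -
  show "p ^ e \<in> ZI" "p ^ e \<noteq> 0"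
    using assms by (auto simp: gprime_def)
  have "gdvd p (p ^ e)"
    using assms le_imp_power_gdvd[of p 1 e] by (simp add: gprime_def)
  then show "\<not> gunit (p ^ e)"
    using assms(1) gdvd_trans by (auto simp: gunit_def gprime_def)
qed

lemma decompose_power_factor:
  assumes p: "p \<in> ZI" "p \<noteq> 0" "\<not> gunit p"
  shows "b \<in> ZI \<Longrightarrow> b \<noteq> 0 \<Longrightarrow> \<exists>e c. c \<in> ZI \<and> b = p ^ e * c \<and> \<not> gdvd p c"
proof (induction "gnorm b" arbitrary: b rule: less_induct)
  case less
  show ?case
  proof (cases "gdvd p b")
    case False
    then show ?thesis
      using less.prems by (intro exI[of _ 0] exI[of _ b]) auto
  next
    case True
    then obtain c where c: "c \<in> ZI" "b = p * c" "c \<noteq> 0"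
      using less.prems by (auto simp: gdvd_def)
    then have "gnorm c < gnorm b"
      using p norm_less_mult_nonunit less.prems(1) by (intro gnorm_less) auto
    then obtain e c' where "c' \<in> ZI" "c = p ^ e * c'" "\<not> gdvd p c'"
      using less.hyps c by blast
    with c show ?thesis
      by (intro exI[of _ "Suc e"] exI[of _ c']) auto
  qed
qed

lemma ZI_prime_power_induct [consumes 2, case_names unit prime_power]:
  assumes "b \<in> ZI" "b \<noteq> 0"
    and unit: "\<And>u. u \<in> ZI \<Longrightarrow> gunit u \<Longrightarrow> P u"
    and prime_power: "\<And>p e c. gprime p \<Longrightarrow> e \<noteq> 0 \<Longrightarrow> c \<in> ZI \<Longrightarrow> c \<noteq> 0 \<Longrightarrow>
        \<not> gdvd p c \<Longrightarrow> P c \<Longrightarrow> P (p ^ e * c)"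
  shows "P b"
  using assms(1,2)
proof (induction "gnorm b" arbitrary: b rule: less_induct)
  case less
  show ?case
  proof (cases "gunit b")
    case False
    then obtain p where p: "gprime p" "gdvd p b"
      using exists_gprime_gdvd less.prems by blast
    then obtain e c where c: "c \<in> ZI" "b = p ^ e * c" "\<not> gdvd p c"
      using decompose_power_factor[of p b] less.prems by (auto simp: gprime_def)
    have "e \<noteq> 0"
      using c p(2) by (cases e) auto
    have "p ^ e \<in> ZI" "p ^ e \<noteq> 0" "\<not> gunit (p ^ e)" "c \<noteq> 0"
      using gprime_power[OF p(1)] \<open>e \<noteq> 0\<close> c(2) less.prems by auto
    then have "gnorm c < gnorm b"
      using c less.prems(1) norm_less_mult_nonunit by (intro gnorm_less) auto
    with less c p \<open>e \<noteq> 0\<close> \<open>c \<noteq> 0\<close> show ?thesis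
      by (auto intro: prime_power)
  qed (use less.prems unit in auto)
qed

section \<open>Principal ideals\<close>

lemma mem_principal: "y \<in> principal g \<longleftrightarrow> gdvd g y"
  by (auto simp: principal_def gdvd_def)

lemma principal_subset_iff: "principal a \<subseteq> principal b \<longleftrightarrow> gdvd b a"
proof
  assume "principal a \<subseteq> principal b"
  moreover have "a \<in> principal a"
    by (simp add: mem_principal)
  ultimately have "a \<in> principal b"
    by (rule subsetD)
  then show "gdvd b a"
    by (simp add: mem_principal)
next
  assume "gdvd b a"
  then show "principal a \<subseteq> principal b"
    using gdvd_trans[OF \<open>gdvd b a\<close>] by (auto simp: mem_principal)
qed

lemma principal_eq_iff: "principal a = principal b \<longleftrightarrow> gdvd a b \<and> gdvd b a"
  by (metis principal_subset_iff subset_antisym order_refl)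

lemma principal_mult_gunit:
  assumes "gunit u" "u \<in> ZI" shows "principal (b * u) = principal b"
proof -
  obtain w where "w \<in> ZI" "1 = u * w"
    using assms(1) by (auto simp: gunit_def gdvd_def)
  then have "gdvd (b * u) b"
    by (metis gdvd_triv_left mult.assoc mult_1_right)
  moreover have "gdvd b (b * u)"
    using assms(2) by simp
  ultimately show ?thesis
    by (simp add: principal_eq_iff)
qed

lemma gideal_principal:
  assumes "g \<in> ZI" shows "gideal (principal g)"
proof -
  have "principal g \<subseteq> ZI"
    using gdvd_ZI[OF assms] by (auto simp: mem_principal)
  moreover have "\<forall>x\<in>principal g. \<forall>y\<in>principal g. x + y \<in> principal g"
    by (simp add: mem_principal gdvd_add)
  moreover have "\<forall>x\<in>principal g. \<forall>r\<in>ZI. r * x \<in> principal g"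
    by (simp add: mem_principal gdvd_mult)
  ultimately show ?thesis
    by (simp add: gideal_def mem_principal)
qed

lemma ideal_mult_principal:
  assumes "a \<in> ZI" "b \<in> ZI" shows "ideal_mult (principal a) (principal b) = principal (a * b)"
  unfolding ideal_mult_def ideal_gen_def
proof (rule antisym)
  let ?S = "{x * y |x y. x \<in> principal a \<and> y \<in> principal b}"
  have "?S \<subseteq> principal (a * b)"
    by (auto simp: mem_principal intro: mult_gdvd_mono)
  then show "\<Inter>{I. gideal I \<and> ?S \<subseteq> I} \<subseteq> principal (a * b)"
    using gideal_principal[of "a * b"] assms by (intro Inter_lower) simp
  show "principal (a * b) \<subseteq> \<Inter>{I. gideal I \<and> ?S \<subseteq> I}"
  proof (rule Inter_greatest, safe)
    fix I y assume I: "gideal I" "?S \<subseteq> I" and "y \<in> principal (a * b)"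
    then obtain c where "c \<in> ZI" "y = c * (a * b)"
      by (auto simp: principal_def mult.commute)
    moreover have "a \<in> principal a" "b \<in> principal b"
      by (simp_all add: mem_principal)
    then have "a * b \<in> ?S"
      by blast
    ultimately show "y \<in> I"
      using I unfolding gideal_def by blast
  qed
qed

lemma principal_1 [simp]: "principal 1 = ZI"
  by (auto simp: mem_principal)

lemma ideal_pow_principal: "a \<in> ZI \<Longrightarrow> ideal_pow (principal a) n = principal (a ^ n)"
  by (induction n) (simp_all add: ideal_mult_principal)

lemma mem_ideal_pow_principal: "a \<in> ZI \<Longrightarrow> x \<in> ideal_pow (principal a) n \<longleftrightarrow> gdvd (a ^ n) x"
  by (simp add: ideal_pow_principal mem_principal)

lemma nzp_ideal_principal_iff:
  assumes "g \<in> ZI" shows "nzp_ideal (principal g) \<longleftrightarrow> g \<noteq> 0 \<and> \<not> gunit g"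
proof -
  have "principal g = {0} \<longleftrightarrow> g = 0"
  proof
    assume "principal g = {0}"
    moreover have "g \<in> principal g"
      by (simp add: mem_principal)
    ultimately show "g = 0"
      by simp
  next
    assume "g = 0"
    then show "principal g = {0}"
      by (auto simp: mem_principal)
  qed
  moreover have "principal g = ZI \<longleftrightarrow> gunit g"
  proof
    assume "principal g = ZI"
    then show "gunit g"
      by (metis ZI_1 gunit_def mem_principal)
  next
    assume "gunit g"
    then have "x \<in> principal g \<longleftrightarrow> x \<in> ZI" for x
      using gunit_gdvd[of g x] gdvd_ZI[OF assms, of x] by (auto simp: mem_principal)
    then show "principal g = ZI"
      by blast
  qed
  ultimately show ?thesis
    using gideal_principal[OF assms] by (simp add: nzp_ideal_def)
qed

lemma nz_prime_ideal_principal: "gprime p \<Longrightarrow> nz_prime_ideal (principal p)"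
  by (simp add: nz_prime_ideal_def gprime_def nzp_ideal_principal_iff mem_principal)

section \<open>Polynomials over the Gaussian integers\<close>

lemma ZI_poly_linear: "c \<in> ZI \<Longrightarrow> a \<in> ZI \<Longrightarrow> ZI_poly [:c, a:]"
  by (simp add: ZI_poly_def coeff_pCons split: nat.split)

lemma ZI_poly_pcompose: "ZI_poly p \<Longrightarrow> ZI_poly q \<Longrightarrow> ZI_poly (pcompose p q)"
  unfolding ZI_poly_def by (intro allI coeff_pcompose_semiring_closed) simp_all

lemma poly_ZI: "ZI_poly p \<Longrightarrow> x \<in> ZI \<Longrightarrow> poly p x \<in> ZI"
  by (simp add: ZI_poly_def poly_altdef)

lemma gdvd_poly_diff:
  assumes "ZI_poly p" "x \<in> ZI" "y \<in> ZI" "gdvd d (x - y)"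
  shows "gdvd d (poly p x - poly p y)"
  using assms(1)
proof (induction p rule: pCons_induct)
  case (pCons a p)
  have "ZI_poly p"
    using pCons.prems by (metis ZI_poly_def coeff_pCons_Suc)
  then have "gdvd d (x * (poly p x - poly p y))" "gdvd d ((x - y) * poly p y)"
    using pCons.IH assms(2-4) poly_ZI by auto
  moreover have "poly (pCons a p) x - poly (pCons a p) y = x * (poly p x - poly p y) + (x - y) * poly p y"
    by (simp add: algebra_simps)
  ultimately show ?case
    by (simp add: gdvd_add)
qed simp

lemma coeff_pcompose_linear_sum:
  fixes p :: "'a :: comm_semiring_1 poly"
  shows "coeff (pcompose p [:c, a:]) k =
    (\<Sum>i\<le>degree p. coeff p i * (of_nat (i choose k) * a ^ k * c ^ (i - k)))"
proof -
  have "coeff ([:c, a:] ^ i) k = of_nat (i choose k) * a ^ k * c ^ (i - k)" for i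
  proof (cases "k \<le> i")
    case False
    have "degree ([:c, a:] ^ i) \<le> i"
      using degree_power_le[of "[:c, a:]" i] by (simp split: if_splits)
    with False show ?thesis
      by (simp add: coeff_eq_0 binomial_eq_0)
  qed (simp add: coeff_linear_poly_power)
  moreover have "pcompose p [:c, a:] = (\<Sum>i\<le>degree p. smult (coeff p i) ([:c, a:] ^ i))"
    by (simp add: pcompose_altdef poly_altdef degree_map_poly coeff_map_poly)
  ultimately show ?thesis
    by (simp add: coeff_sum)
qed

lemma gdvd_coeff_pcompose_linear:
  assumes Q: "ZI_poly Q" and \<pi>: "\<pi> \<in> ZI" "gdvd \<pi> a" "gdvd \<pi> b"
    and low: "\<And>j. j < m \<Longrightarrow> gdvd (\<pi> ^ m) (coeff Q j)"
  shows "gdvd (\<pi> ^ m) (coeff (pcompose Q [:b, a:]) k)"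
  unfolding coeff_pcompose_linear_sum
proof (intro gdvd_sum)
  fix j
  have ab: "a \<in> ZI" "b \<in> ZI" "coeff Q j \<in> ZI"
    using gdvd_ZI[OF \<pi>(1)] \<pi>(2,3) Q by (auto simp: ZI_poly_def)
  consider "j < m" | "m \<le> j" "k \<le> j" | "j < k"
    by linarith
  then show "gdvd (\<pi> ^ m) (coeff Q j * (of_nat (j choose k) * a ^ k * b ^ (j - k)))"
  proof cases
    case 1
    with ab show ?thesis
      by (simp add: low gdvd_mult2)
  next
    case 2
    have "gdvd (\<pi> ^ k * \<pi> ^ (j - k)) (a ^ k * b ^ (j - k))"
      using \<pi>(2,3) by (intro mult_gdvd_mono gdvd_power_same)
    moreover have "\<pi> ^ k * \<pi> ^ (j - k) = \<pi> ^ j"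
      using 2 by (simp flip: power_add)
    ultimately have "gdvd (\<pi> ^ j) (a ^ k * b ^ (j - k))"
      by simp
    then have "gdvd (\<pi> ^ m) (a ^ k * b ^ (j - k))"
      using gdvd_trans le_imp_power_gdvd[OF \<pi>(1) 2(1)] by blast
    moreover have "coeff Q j * (of_nat (j choose k) * a ^ k * b ^ (j - k)) =
        (a ^ k * b ^ (j - k)) * (coeff Q j * of_nat (j choose k))"
      by (simp add: ac_simps)
    ultimately show ?thesis
      using ab(3) by (metis ZI_mult ZI_of_nat gdvd_mult2)
  next
    case 3
    then show ?thesis
      by (simp add: binomial_eq_0)
  qed
qed

lemma exists_root_mod_mult:
  assumes f: "ZI_poly f" and ab: "gcoprime a b" "a \<in> ZI" "b \<in> ZI"
    and z: "z\<^sub>1 \<in> ZI" "z\<^sub>2 \<in> ZI" "gdvd a (poly f z\<^sub>1)" "gdvd b (poly f z\<^sub>2)"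
  shows "\<exists>z\<in>ZI. gdvd (a * b) (poly f z)"
proof -
  obtain u v where uv: "u \<in> ZI" "v \<in> ZI" "u * a + v * b = 1"
    using ab(1) by (auto simp: gcoprime_def)
  define z where "z = z\<^sub>1 * (v * b) + z\<^sub>2 * (u * a)"
  have zZ: "z \<in> ZI"
    using uv ab z by (simp add: z_def)
  have "z - z\<^sub>1 = a * ((z\<^sub>2 - z\<^sub>1) * u) + z\<^sub>1 * (u * a + v * b - 1)"
    "z - z\<^sub>2 = b * ((z\<^sub>1 - z\<^sub>2) * v) + z\<^sub>2 * (u * a + v * b - 1)"
    by (simp_all add: z_def algebra_simps)
  then have "z - z\<^sub>1 = a * ((z\<^sub>2 - z\<^sub>1) * u)" "z - z\<^sub>2 = b * ((z\<^sub>1 - z\<^sub>2) * v)"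
    by (simp_all add: uv(3))
  then have "gdvd a (z - z\<^sub>1)" "gdvd b (z - z\<^sub>2)"
    using uv z by simp_all
  then have "gdvd a (poly f z - poly f z\<^sub>1)" "gdvd b (poly f z - poly f z\<^sub>2)"
    using gdvd_poly_diff[OF f zZ] z by auto
  then have "gdvd a (poly f z)" "gdvd b (poly f z)"
    using z(3,4) by (metis diff_add_cancel gdvd_add)+
  with zZ ab(1) show ?thesis
    by (blast intro: gcoprime_mult_gdvd)
qed

lemma intersective_if_roots_mod_prime_powers:
  assumes f: "ZI_poly f"
    and local: "\<And>p e. gprime p \<Longrightarrow> e \<noteq> 0 \<Longrightarrow> \<exists>z\<in>ZI. gdvd (p ^ e) (poly f z)"
  shows "intersective f"
  unfolding intersective_def
proof (intro conjI ballI impI f)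
  fix b assume "b \<in> ZI" "b \<noteq> 0"
  then show "\<exists>z\<in>ZI. gdvd b (poly f z)"
  proof (induction rule: ZI_prime_power_induct)
    case (unit u)
    then show ?case
      using f gunit_gdvd poly_ZI ZI_0 by blast
  next
    case (prime_power p e c)
    obtain z\<^sub>1 where "z\<^sub>1 \<in> ZI" "gdvd (p ^ e) (poly f z\<^sub>1)"
      using local prime_power.hyps(1,2) by blast
    moreover obtain z\<^sub>2 where "z\<^sub>2 \<in> ZI" "gdvd c (poly f z\<^sub>2)"
      using prime_power.IH by blast
    moreover have "gcoprime (p ^ e) c" "p ^ e \<in> ZI"
      using prime_power.hyps gprime_gcoprime gcoprime_power_left gprime_power(1) by (auto simp: gprime_def)
    ultimately show ?case
      using exists_root_mod_mult[OF f] prime_power.hyps(3) by blast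
  qed
qed

lemma intersective_smult_inverse:
  assumes f: "intersective f" and \<gamma>: "\<gamma> \<in> ZI" "\<gamma> \<noteq> 0" "\<And>k. gdvd \<gamma> (coeff f k)"
  shows "intersective (smult (1 / \<gamma>) f)"
  unfolding intersective_def ZI_poly_def
proof (intro conjI allI ballI impI)
  fix k
  obtain t where "t \<in> ZI" "coeff f k = \<gamma> * t"
    using \<gamma>(3) by (auto simp: gdvd_def)
  with \<gamma>(2) show "coeff (smult (1 / \<gamma>) f) k \<in> ZI"
    by simp
next
  fix a assume a: "a \<in> ZI" "a \<noteq> 0"
  with \<gamma> have "a * \<gamma> \<in> ZI" "a * \<gamma> \<noteq> 0"
    by simp_all
  then obtain z t where "z \<in> ZI" "t \<in> ZI" "poly f z = a * \<gamma> * t"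
    using f by (auto simp: intersective_def gdvd_def)
  moreover from this have "poly (smult (1 / \<gamma>) f) z = a * t"
    using \<gamma>(2) by simp
  ultimately show "\<exists>z\<in>ZI. gdvd a (poly (smult (1 / \<gamma>) f) z)"
    by (metis gdvd_triv_left)
qed

section \<open>Coefficient bounds\<close>

lemma norm_coeff_le_Mp: "cmod (coeff p i) \<le> Mp p / 2"
proof (cases "i \<le> degree p")
  case True
  then show ?thesis
    by (simp add: Mp_def)
next
  case False
  have "cmod (coeff p 0) \<le> Mp p / 2"
    by (simp add: Mp_def)
  then have "0 \<le> Mp p / 2"
    using norm_ge_zero order_trans by blast
  with False show ?thesis
    by (simp add: coeff_eq_0)
qed

lemma Mp_le: "(\<And>i. cmod (coeff p i) \<le> B) \<Longrightarrow> Mp p \<le> 2 * B"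
  by (simp add: Mp_def)

lemma binomial_mult_power2_le: "(i choose k) * 2 ^ (i - k) \<le> (3::nat) ^ i"
proof (cases "k \<le> i")
  case True
  have "(3::nat) ^ i = (1 + 2) ^ i"
    by (simp add: numeral_3_eq_3)
  also have "\<dots> = (\<Sum>j\<le>i. (i choose j) * 1 ^ j * 2 ^ (i - j))"
    using binomial[of 1 2 i] by (simp only: of_nat_id)
  also have "\<dots> = (\<Sum>j\<le>i. (i choose j) * 2 ^ (i - j))"
    by simp
  also have "(i choose k) * 2 ^ (i - k) \<le> \<dots>"
    using True by (intro member_le_sum) auto
  finally show ?thesis .
qed (simp add: binomial_eq_0)

lemma sum_binomial_mult_power2_le: "(\<Sum>i\<le>d. real (i choose k) * 2 ^ (i - k)) \<le> 4 ^ d"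
proof -
  have "(\<Sum>i\<le>d. (3::nat) ^ i) \<le> 4 ^ d"
  proof (induction d)
    case (Suc d)
    then show ?case
      using power_mono[of "3::nat" 4 d] by simp
  qed simp
  then have "(\<Sum>i\<le>d. (i choose k) * 2 ^ (i - k)) \<le> (4::nat) ^ d"
    using sum_mono[of "{..d}" "\<lambda>i. (i choose k) * 2 ^ (i - k)", OF binomial_mult_power2_le] by linarith
  then have "real (\<Sum>i\<le>d. (i choose k) * 2 ^ (i - k)) \<le> real ((4::nat) ^ d)"
    by (simp only: of_nat_le_iff)
  then show ?thesis
    by simp
qed

lemma norm_coeff_pcompose_linear_le:
  fixes p :: "complex poly"
  assumes c: "cmod c \<le> 2 * cmod a" and a: "1 \<le> cmod a" and M: "\<And>i. cmod (coeff p i) \<le> M"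
  shows "cmod (coeff (pcompose p [:c, a:]) k) \<le> 4 ^ degree p * cmod a ^ degree p * M"
proof -
  let ?d = "degree p"
  have M0: "0 \<le> M"
    using M[of 0] norm_ge_zero order_trans by blast
  have term_le: "cmod (coeff p i * (of_nat (i choose k) * a ^ k * c ^ (i - k)))
      \<le> M * cmod a ^ ?d * (real (i choose k) * 2 ^ (i - k))" if "i \<le> ?d" for i
  proof (cases "k \<le> i")
    case True
    have "cmod c ^ (i - k) \<le> (2 * cmod a) ^ (i - k)"
      by (rule power_mono[OF c norm_ge_zero])
    then have "cmod (a ^ k * c ^ (i - k)) \<le> cmod a ^ k * (2 * cmod a) ^ (i - k)"
      unfolding norm_mult norm_power by (rule mult_left_mono) simp
    also have "\<dots> = 2 ^ (i - k) * cmod a ^ i"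
      using True by (simp add: power_mult_distrib mult.left_commute flip: power_add)
    also have "\<dots> \<le> 2 ^ (i - k) * cmod a ^ ?d"
      using a that by (simp add: power_increasing)
    finally have "cmod (a ^ k * c ^ (i - k)) \<le> 2 ^ (i - k) * cmod a ^ ?d" .
    then have "cmod (coeff p i) * (real (i choose k) * cmod (a ^ k * c ^ (i - k)))
        \<le> M * (real (i choose k) * (2 ^ (i - k) * cmod a ^ ?d))"
      using M[of i] M0 by (intro mult_mono mult_left_mono) simp_all
    then show ?thesis
      by (simp add: norm_mult ac_simps)
  qed (simp add: binomial_eq_0)
  have "cmod (coeff (pcompose p [:c, a:]) k)
      \<le> (\<Sum>i\<le>?d. cmod (coeff p i * (of_nat (i choose k) * a ^ k * c ^ (i - k))))"
    unfolding coeff_pcompose_linear_sum by (rule norm_sum)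
  also have "\<dots> \<le> (\<Sum>i\<le>?d. M * cmod a ^ ?d * (real (i choose k) * 2 ^ (i - k)))"
    by (intro sum_mono term_le) simp
  also have "\<dots> = M * cmod a ^ ?d * (\<Sum>i\<le>?d. real (i choose k) * 2 ^ (i - k))"
    by (simp add: sum_distrib_left)
  also have "\<dots> \<le> M * cmod a ^ ?d * 4 ^ ?d"
    using M0 by (intro mult_left_mono sum_binomial_mult_power2_le) simp
  finally show ?thesis
    by (simp add: ac_simps)
qed

lemma Mp_smult_pcompose_linear_le:
  fixes q :: "complex poly"
  assumes r: "cmod r \<le> 2 * cmod \<alpha>" and \<alpha>: "1 \<le> cmod \<alpha>" and \<gamma>: "cmod \<alpha> \<le> cmod \<gamma>"
  shows "Mp (smult (1 / \<gamma>) (pcompose q [:r, \<alpha>:]))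
    \<le> 2 ^ (2 * degree q) * cmod \<alpha> ^ (degree q - 1) * Mp q"
proof -
  let ?d = "degree q" and ?B = "4 ^ degree q * cmod \<alpha> ^ (degree q - 1) * (Mp q / 2)"
  have \<alpha>_pow: "cmod \<alpha> ^ ?d \<le> cmod \<alpha> ^ (?d - 1) * cmod \<gamma>"
  proof (cases ?d)
    case (Suc n)
    then show ?thesis
      using mult_right_mono[OF \<gamma> zero_le_power[OF norm_ge_zero]] by (simp add: ac_simps)
  qed (use \<alpha> \<gamma> in simp)
  have Mp0: "0 \<le> Mp q / 2"
    using norm_coeff_le_Mp[of q 0] norm_ge_zero order_trans by blast
  have "cmod (coeff (smult (1 / \<gamma>) (pcompose q [:r, \<alpha>:])) k) \<le> ?B" for k
  proof -
    have "cmod (coeff (pcompose q [:r, \<alpha>:]) k) \<le> 4 ^ ?d * cmod \<alpha> ^ ?d * (Mp q / 2)"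
      using r \<alpha> norm_coeff_le_Mp by (rule norm_coeff_pcompose_linear_le)
    also have "\<dots> \<le> 4 ^ ?d * (cmod \<alpha> ^ (?d - 1) * cmod \<gamma>) * (Mp q / 2)"
      using \<alpha>_pow Mp0 by (intro mult_right_mono mult_left_mono) simp_all
    finally have "cmod (coeff (pcompose q [:r, \<alpha>:]) k) \<le> ?B * cmod \<gamma>"
      by (simp add: ac_simps)
    moreover have "\<gamma> \<noteq> 0"
      using \<alpha> \<gamma> by auto
    ultimately show ?thesis
      by (simp add: norm_divide divide_le_eq ac_simps)
  qed
  then have "Mp (smult (1 / \<gamma>) (pcompose q [:r, \<alpha>:])) \<le> 2 * ?B"
    by (rule Mp_le)
  then show ?thesis
    by (simp add: power_mult)
qed

section \<open>Roots in the completions and their multiplicities\<close>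

locale padic_root_system =
  fixes q :: "complex poly" and s :: "complex set \<Rightarrow> nat \<Rightarrow> complex"
  assumes ZI_poly_q: "ZI_poly q" and q_nonzero: "q \<noteq> 0"
    and padic_roots: "\<And>P. nz_prime_ideal P \<Longrightarrow> padic_root q P (s P)"
begin

definition mult_at :: "complex \<Rightarrow> nat" where
  "mult_at p = root_mult q (principal p) (s (principal p))"

lemma root_seq:
  assumes "gprime p" "1 \<le> n"
  shows "s (principal p) n \<in> ZI"
    and "gdvd (p ^ n) (poly q (s (principal p) n))"
    and "gdvd (p ^ n) (s (principal p) (Suc n) - s (principal p) n)"
  using padic_roots[OF nz_prime_ideal_principal[OF assms(1)]] assms
  by (simp_all add: padic_root_def padic_elem_def mem_ideal_pow_principal gprime_def)

lemma root_seq_cong: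
  assumes p: "gprime p" and "1 \<le> e" "e \<le> N"
  shows "gdvd (p ^ e) (s (principal p) N - s (principal p) e)"
  using assms(3)
proof (induction N rule: dec_induct)
  case (step n)
  have "gdvd (p ^ e) (p ^ n)"
    using p step.hyps(1) by (simp add: gprime_def le_imp_power_gdvd)
  then have "gdvd (p ^ e) (s (principal p) (Suc n) - s (principal p) n)"
    using root_seq(3)[OF p] step.hyps(1) assms(2) gdvd_trans by fastforce
  from this step.IH have "gdvd (p ^ e)
      ((s (principal p) (Suc n) - s (principal p) n) + (s (principal p) n - s (principal p) e))"
    by (rule gdvd_add)
  then show ?case
    by simp
qed simp

lemma
  assumes p: "gprime p"
  shows mult_at_pos: "1 \<le> mult_at p"
    and gdvd_coeff_below_mult_at:
      "\<And>j n. j < mult_at p \<Longrightarrow> 1 \<le> n \<Longrightarrow> gdvd (p ^ n) (coeff (pcompose q [:s (principal p) n, 1:]) j)"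
proof -
  have pZ: "p \<in> ZI"
    using p by (simp add: gprime_def)
  define R where "R k \<longleftrightarrow> \<not> (\<forall>n\<ge>1. gdvd (p ^ n) (coeff (pcompose q [:s (principal p) n, 1:]) k))"
    for k
  have mult_at_eq: "mult_at p = (LEAST k. R k)"
    by (simp add: mult_at_def root_mult_def R_def mem_ideal_pow_principal[OF pZ])
  have "lead_coeff q \<in> ZI" "lead_coeff q \<noteq> 0"
    using ZI_poly_q q_nonzero by (simp_all add: ZI_poly_def)
  moreover have "\<exists>n. \<not> gdvd (p ^ n) (lead_coeff q)"
    using p \<open>lead_coeff q \<noteq> 0\<close> by (intro not_gdvd_large_power) (simp_all add: gprime_def)
  then obtain n where n: "\<not> gdvd (p ^ n) (lead_coeff q)" ..
  ultimately have "1 \<le> n"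
    by (cases n) auto
  moreover have "coeff (pcompose q [:s (principal p) n, 1:]) (degree q) = lead_coeff q"
    using lead_coeff_comp[of "[:s (principal p) n, 1:]" q] by (simp add: degree_pcompose)
  ultimately have "R (degree q)"
    using n by (auto simp: R_def)
  then have "R (mult_at p)"
    unfolding mult_at_eq by (rule LeastI)
  moreover have "\<not> R 0"
    using root_seq(2)[OF p] by (simp add: R_def poly_0_coeff_0 [symmetric] poly_pcompose)
  ultimately show "1 \<le> mult_at p"
    by (cases "mult_at p") auto
  show "gdvd (p ^ n) (coeff (pcompose q [:s (principal p) n, 1:]) j)"
    if "j < mult_at p" "1 \<le> n" for j n
    using not_less_Least[of j R] that by (auto simp: mult_at_eq R_def)
qed

end

locale approx_root = padic_root_system +
  fixes \<alpha> r :: complex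
  assumes \<alpha>: "\<alpha> \<in> ZI" "\<alpha> \<noteq> 0" and r: "r \<in> ZI"
    and r_cong: "\<And>P n. nz_prime_ideal P \<Longrightarrow> 1 \<le> n \<Longrightarrow> principal \<alpha> \<subseteq> ideal_pow P n \<Longrightarrow>
      r - s P n \<in> ideal_pow P n"
begin

lemma r_cong_root_seq:
  assumes p: "gprime p" and "gdvd (p ^ e) \<alpha>" "e \<le> N" "1 \<le> N"
  shows "gdvd (p ^ e) (r - s (principal p) N)"
proof (cases "e = 0")
  case True
  then show ?thesis
    using r root_seq(1)[OF p \<open>1 \<le> N\<close>] by simp
next
  case False
  have pZ: "p \<in> ZI"
    using p by (simp add: gprime_def)
  have "principal \<alpha> \<subseteq> ideal_pow (principal p) e"
    using assms(2) by (simp add: ideal_pow_principal[OF pZ] principal_subset_iff)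
  then have "gdvd (p ^ e) (r - s (principal p) e)"
    using r_cong[OF nz_prime_ideal_principal[OF p]] False by (simp add: mem_ideal_pow_principal[OF pZ])
  moreover have "gdvd (p ^ e) (s (principal p) N - s (principal p) e)"
    using root_seq_cong[OF p] False assms(3) by simp
  ultimately have "gdvd (p ^ e) ((r - s (principal p) e) - (s (principal p) N - s (principal p) e))"
    by (rule gdvd_diff)
  then show ?thesis
    by simp
qed

lemma gdvd_coeff_rescaled:
  assumes p: "gprime p" and e: "gdvd (p ^ e) \<alpha>"
  shows "gdvd (p ^ (mult_at p * e)) (coeff (pcompose q [:r, \<alpha>:]) k)"
proof -
  define m where "m = mult_at p"
  define N where "N = m * e + e + 1"
  define t where "t = s (principal p) N"
  have pZ: "p \<in> ZI"
    using p by (simp add: gprime_def)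
  have tZ: "t \<in> ZI"
    using root_seq(1)[OF p] by (simp add: t_def N_def)
  have "pcompose q [:r, \<alpha>:] = pcompose (pcompose q [:t, 1:]) [:r - t, \<alpha>:]"
    by (simp add: pcompose_pCons flip: pcompose_assoc)
  moreover have "gdvd ((p ^ e) ^ m) (coeff (pcompose (pcompose q [:t, 1:]) [:r - t, \<alpha>:]) k)"
  proof (rule gdvd_coeff_pcompose_linear)
    show "ZI_poly (pcompose q [:t, 1:])"
      using tZ by (simp add: ZI_poly_pcompose ZI_poly_q ZI_poly_linear)
    show "gdvd (p ^ e) (r - t)"
      using r_cong_root_seq[OF p e] by (simp add: t_def N_def)
    fix j assume "j < m"
    then have "gdvd (p ^ N) (coeff (pcompose q [:t, 1:]) j)"
      using gdvd_coeff_below_mult_at[OF p, of j N] by (simp add: m_def t_def N_def)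
    moreover have "gdvd ((p ^ e) ^ m) (p ^ N)"
      using le_imp_power_gdvd[OF pZ, of "e * m" N] by (simp add: N_def power_mult)
    ultimately show "gdvd ((p ^ e) ^ m) (coeff (pcompose q [:t, 1:]) j)"
      using gdvd_trans by blast
  qed (use pZ e in simp_all)
  ultimately show ?thesis
    by (simp add: m_def mult.commute flip: power_mult)
qed

lemma exists_root_mod_prime_power:
  assumes p: "gprime p" and "E \<noteq> 0"
  shows "\<exists>z\<in>ZI. gdvd (p ^ E) (poly q (r + \<alpha> * z))"
proof -
  have pZ: "p \<in> ZI"
    using p by (simp add: gprime_def)
  obtain e u where u: "u \<in> ZI" "\<alpha> = p ^ e * u" "\<not> gdvd p u"
    using decompose_power_factor[of p \<alpha>] p \<alpha> by (auto simp: gprime_def)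
  define N where "N = E + e"
  define t where "t = s (principal p) N"
  have tZ: "t \<in> ZI" and root_t: "gdvd (p ^ N) (poly q t)"
    using root_seq(1,2)[OF p] \<open>E \<noteq> 0\<close> by (simp_all add: t_def N_def)
  have "gdvd (p ^ e) (r - t)"
    using r_cong_root_seq[OF p] u(1,2) \<open>E \<noteq> 0\<close> by (simp add: t_def N_def)
  then obtain w where w: "w \<in> ZI" "r - t = p ^ e * w"
    by (auto simp: gdvd_def)
  have "gcoprime (p ^ E) u"
    using gprime_gcoprime[OF p u(1,3)] gcoprime_power_left pZ u(1) by blast
  then obtain a b where ab: "a \<in> ZI" "b \<in> ZI" "a * p ^ E + b * u = 1"
    by (auto simp: gcoprime_def)
  text \<open>\<open>-b w\<close> solves \<open>u z \<equiv> -w (mod p\<^sup>E)\<close>, so that \<open>r + \<alpha> z \<equiv> t (mod p\<^sup>N)\<close>.\<close>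
  define z where "z = - b * w"
  have "r + \<alpha> * z - t = (r - t) - p ^ e * u * b * w"
    by (simp add: z_def u(2) algebra_simps)
  also have "\<dots> = p ^ e * w * (a * p ^ E + b * u) - p ^ e * u * b * w"
    by (simp only: w(2) ab(3) mult_1_right)
  also have "\<dots> = (a * w) * p ^ N"
    by (simp add: N_def power_add algebra_simps)
  finally have "gdvd (p ^ N) (r + \<alpha> * z - t)"
    using ab(1) w(1) by simp
  moreover have "gdvd (p ^ E) (p ^ N)"
    using pZ by (simp add: N_def le_imp_power_gdvd)
  ultimately have "gdvd (p ^ E) (r + \<alpha> * z - t)"
    using gdvd_trans by blast
  moreover have zZ: "z \<in> ZI"
    using ab w by (simp add: z_def)
  ultimately have "gdvd (p ^ E) (poly q (r + \<alpha> * z) - poly q t)"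
    using r \<alpha>(1) by (intro gdvd_poly_diff[OF ZI_poly_q _ tZ]) simp_all
  moreover have "gdvd (p ^ E) (poly q t)"
    using gdvd_trans[OF \<open>gdvd (p ^ E) (p ^ N)\<close> root_t] .
  ultimately have "gdvd (p ^ E) (poly q (r + \<alpha> * z) - poly q t + poly q t)"
    by (rule gdvd_add)
  with zZ show ?thesis
    by auto
qed

lemma intersective_rescaled: "intersective (pcompose q [:r, \<alpha>:])"
proof (rule intersective_if_roots_mod_prime_powers)
  show "ZI_poly (pcompose q [:r, \<alpha>:])"
    using \<alpha> r by (simp add: ZI_poly_pcompose ZI_poly_q ZI_poly_linear)
  show "\<exists>z\<in>ZI. gdvd (p ^ e) (poly (pcompose q [:r, \<alpha>:]) z)" if "gprime p" "e \<noteq> 0" for p e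
    using exists_root_mod_prime_power[OF that] by (simp add: poly_pcompose mult.commute)
qed

end

locale root_multiplicity_map = padic_root_system +
  fixes lam :: "complex set \<Rightarrow> complex set"
  assumes lam_mult: "\<And>I J. nzp_ideal I \<Longrightarrow> nzp_ideal J \<Longrightarrow>
      lam (ideal_mult I J) = ideal_mult (lam I) (lam J)"
    and lam_prime: "\<And>P. nz_prime_ideal P \<Longrightarrow> lam P = ideal_pow P (root_mult q P (s P))"
begin

text \<open>\<open>g\<close> generates \<open>\<lambda>((b))\<close>; since \<open>lam\<close> is only specified on proper ideals,
  \<open>\<lambda>((1)) = (1)\<close> is used for units \<open>b\<close>.\<close>

definition lam_gen :: "complex \<Rightarrow> complex \<Rightarrow> bool" where
  "lam_gen b g \<longleftrightarrow> g \<in> ZI \<and> (if gunit b then gunit g else lam (principal b) = principal g)"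

lemma lam_gen_mult:
  assumes g: "lam_gen a g" and h: "lam_gen b h" and ab: "a \<in> ZI" "a \<noteq> 0" "b \<in> ZI" "b \<noteq> 0"
  shows "lam_gen (a * b) (g * h)"
proof -
  have gh: "g \<in> ZI" "h \<in> ZI"
    using g h by (simp_all add: lam_gen_def)
  consider "gunit a" "gunit b" | "gunit a" "\<not> gunit b" | "\<not> gunit a" "gunit b" | "\<not> gunit a" "\<not> gunit b"
    by blast
  then show ?thesis
  proof cases
    case 1
    with g h ab gh show ?thesis
      by (simp add: lam_gen_def gunit_mult_iff)
  next
    case 2
    with g h ab gh show ?thesis
      by (simp add: lam_gen_def gunit_mult_iff principal_mult_gunit mult.commute[of a] mult.commute[of g])
  next
    case 3
    with g h ab gh show ?thesis
      by (simp add: lam_gen_def gunit_mult_iff principal_mult_gunit)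
  next
    case 4
    then have "nzp_ideal (principal a)" "nzp_ideal (principal b)"
      using ab by (simp_all add: nzp_ideal_principal_iff)
    with 4 g h ab gh show ?thesis
      by (simp add: lam_gen_def gunit_mult_iff lam_mult flip: ideal_mult_principal)
  qed
qed

lemma lam_gen_prime_power:
  assumes p: "gprime p" shows "lam_gen (p ^ e) (p ^ (mult_at p * e))"
proof (induction e)
  case 0
  show ?case
    by (simp add: lam_gen_def gunit_def)
next
  case (Suc e)
  have pZ: "p \<in> ZI" "p \<noteq> 0"
    using p by (simp_all add: gprime_def)
  have "lam (principal p) = principal (p ^ mult_at p)"
    using lam_prime[OF nz_prime_ideal_principal[OF p]] by (simp add: mult_at_def ideal_pow_principal pZ)
  then have "lam_gen p (p ^ mult_at p)"
    using p by (simp add: lam_gen_def gprime_def)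
  from lam_gen_mult[OF this Suc.IH] pZ show ?case
    by (simp add: power_add)
qed

end

locale rescaling = approx_root + root_multiplicity_map
begin

lemma lam_gen_gdvd_coeffs:
  assumes "b \<in> ZI" "b \<noteq> 0" "gdvd b \<alpha>"
  shows "\<exists>g. lam_gen b g \<and> (\<forall>k. gdvd g (coeff (pcompose q [:r, \<alpha>:]) k)) \<and> (\<exists>N. gdvd g (b ^ N)) \<and> gdvd b g"
  using assms
proof (induction rule: ZI_prime_power_induct)
  case (unit u)
  have "\<forall>k. coeff (pcompose q [:r, \<alpha>:]) k \<in> ZI"
    using \<alpha> r ZI_poly_pcompose[OF ZI_poly_q ZI_poly_linear] by (simp add: ZI_poly_def)
  with unit have "lam_gen u 1 \<and> (\<forall>k. gdvd 1 (coeff (pcompose q [:r, \<alpha>:]) k)) \<and> gdvd 1 (u ^ 0) \<and> gdvd u 1"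
    by (simp add: lam_gen_def gunit_def)
  then show ?case
    by blast
next
  case (prime_power p e c)
  define m where "m = mult_at p"
  have pZ: "p \<in> ZI"
    using prime_power.hyps(1) by (simp add: gprime_def)
  have pe: "p ^ e \<in> ZI" "p ^ e \<noteq> 0"
    using gprime_power[OF prime_power.hyps(1,2)] by simp_all
  have e_dvd: "gdvd (p ^ e) \<alpha>" and "gdvd c \<alpha>"
    using prime_power.prems gdvd_trans[of _ "p ^ e * c" \<alpha>] pe(1) prime_power.hyps(3) by auto
  then obtain g N where g: "lam_gen c g" "\<And>k. gdvd g (coeff (pcompose q [:r, \<alpha>:]) k)"
      "gdvd g (c ^ N)" "gdvd c g"
    using prime_power.IH by blast
  have gZ: "g \<in> ZI"
    using g(1) by (simp add: lam_gen_def)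
  define G where "G = p ^ (m * e) * g"
  have "lam_gen (p ^ e * c) G"
    unfolding G_def m_def
    using lam_gen_mult[OF lam_gen_prime_power[OF prime_power.hyps(1)] g(1) pe prime_power.hyps(3,4)] .
  moreover have "gcoprime (p ^ (m * e)) g"
  proof -
    have "gcoprime p c"
      using gprime_gcoprime prime_power.hyps(1,3,5) .
    then have "gcoprime c (p ^ (m * e))"
      using gcoprime_power_left pZ prime_power.hyps(3) gcoprime_commute by blast
    then have "gcoprime (c ^ N) (p ^ (m * e))"
      using gcoprime_power_left pZ prime_power.hyps(3) by simp
    then show ?thesis
      using gcoprime_gdvd_right[OF _ g(3)] gcoprime_commute by blast
  qed
  then have "gdvd G (coeff (pcompose q [:r, \<alpha>:]) k)" for k
    unfolding G_def using gdvd_coeff_rescaled[OF prime_power.hyps(1) e_dvd, folded m_def] g(2)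
    by (rule gcoprime_mult_gdvd)
  moreover have "gdvd G ((p ^ e * c) ^ (m + N))"
  proof -
    have "gdvd (p ^ (m * e)) ((p ^ e * c) ^ m)"
      using prime_power.hyps(3) by (simp add: power_mult_distrib mult.commute flip: power_mult)
    moreover have "gdvd g ((p ^ e * c) ^ N)"
      using gdvd_trans[OF g(3) gdvd_power_same] pe(1) by simp
    ultimately show ?thesis
      unfolding G_def power_add by (rule mult_gdvd_mono)
  qed
  moreover have "gdvd (p ^ e * c) G"
  proof -
    have "e \<le> m * e"
      using mult_at_pos[OF prime_power.hyps(1)] by (simp add: m_def)
    then show ?thesis
      unfolding G_def using le_imp_power_gdvd[OF pZ] g(4) by (rule_tac mult_gdvd_mono) simp_all
  qed
  ultimately show ?case
    by blast
qed

lemma generator_gdvd_coeffs: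
  assumes "\<not> gunit \<alpha>" "\<gamma> \<in> ZI" "lam (principal \<alpha>) = principal \<gamma>"
  shows "\<And>k. gdvd \<gamma> (coeff (pcompose q [:r, \<alpha>:]) k)" and "gdvd \<alpha> \<gamma>"
proof -
  obtain g where g: "lam_gen \<alpha> g" "\<And>k. gdvd g (coeff (pcompose q [:r, \<alpha>:]) k)" "gdvd \<alpha> g"
    using lam_gen_gdvd_coeffs[OF \<alpha> gdvd_refl] by blast
  with assms have "principal \<gamma> = principal g"
    by (simp add: lam_gen_def)
  then have "gdvd \<gamma> g" "gdvd g \<gamma>"
    by (simp_all add: principal_eq_iff)
  with g(2,3) show "gdvd \<gamma> (coeff (pcompose q [:r, \<alpha>:]) k)" "gdvd \<alpha> \<gamma>" for k
    using gdvd_trans by blast+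
qed

end

theorem mainTheorem9:
  fixes q :: "complex poly" and d :: nat
    and s :: "complex set \<Rightarrow> nat \<Rightarrow> complex"
    and lam :: "complex set \<Rightarrow> complex set"
    and A :: "complex set" and \<alpha> \<gamma> r :: complex
  assumes q_int: "intersective q" and q_nz: "q \<noteq> 0" and q_deg: "degree q = d"
    and roots: "\<And>P. nz_prime_ideal P \<Longrightarrow> padic_root q P (s P)"
    and lam_maps: "\<And>I. nzp_ideal I \<Longrightarrow> nzp_ideal (lam I)"
    and lam_mult: "\<And>I J. nzp_ideal I \<Longrightarrow> nzp_ideal J \<Longrightarrow>
                      lam (ideal_mult I J) = ideal_mult (lam I) (lam J)"
    and lam_prime: "\<And>P. nz_prime_ideal P \<Longrightarrow> lam P = ideal_pow P (root_mult q P (s P))"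
    and A_ideal: "nzp_ideal A" and \<alpha>: "\<alpha> \<in> ZI" "A = principal \<alpha>"
    and \<gamma>: "\<gamma> \<in> ZI" "lam A = principal \<gamma>"
    and r: "r \<in> ZI" "cmod r \<le> 2 * cmod \<alpha>" "poly q r \<in> A"
    and r_cong: "\<And>P n. nz_prime_ideal P \<Longrightarrow> n \<ge> 1 \<Longrightarrow> A \<subseteq> ideal_pow P n \<Longrightarrow>
                    r - s P n \<in> ideal_pow P n"
  shows "(\<forall>k. coeff (pcompose q [:r, \<alpha>:]) k \<in> lam A) \<and>
         (let qa = smult (1 / \<gamma>) (pcompose q [:r, \<alpha>:]) in
            intersective qa \<and> degree qa = d \<and>
            Mp qa \<le> 2 ^ (2 * d) * cmod \<alpha> ^ (d - 1) * Mp q)"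
proof -
  have \<alpha>_nonunit: "\<alpha> \<noteq> 0" "\<not> gunit \<alpha>" and "\<gamma> \<noteq> 0"
    using A_ideal lam_maps[OF A_ideal] \<alpha> \<gamma> by (simp_all add: nzp_ideal_principal_iff)
  interpret R: rescaling q s \<alpha> r lam
    using q_int q_nz roots \<alpha> \<alpha>_nonunit r(1) r_cong lam_mult lam_prime
    by unfold_locales (simp_all add: intersective_def)
  have "lam (principal \<alpha>) = principal \<gamma>"
    using \<alpha>(2) \<gamma>(2) by simp
  then have coeffs: "\<And>k. gdvd \<gamma> (coeff (pcompose q [:r, \<alpha>:]) k)" and "gdvd \<alpha> \<gamma>"
    using R.generator_gdvd_coeffs \<alpha>_nonunit(2) \<gamma>(1) by simp_all
  have "intersective (smult (1 / \<gamma>) (pcompose q [:r, \<alpha>:]))"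
    using intersective_smult_inverse[OF R.intersective_rescaled \<gamma>(1) \<open>\<gamma> \<noteq> 0\<close> coeffs] .
  moreover have "degree (smult (1 / \<gamma>) (pcompose q [:r, \<alpha>:])) = d"
    using \<open>\<gamma> \<noteq> 0\<close> \<alpha>_nonunit(1) q_deg by (simp add: degree_pcompose)
  moreover have "Mp (smult (1 / \<gamma>) (pcompose q [:r, \<alpha>:])) \<le> 2 ^ (2 * d) * cmod \<alpha> ^ (d - 1) * Mp q"
    using Mp_smult_pcompose_linear_le[OF r(2) norm_ge_1_if_ZI[OF \<alpha>(1) \<alpha>_nonunit(1)]
      gdvd_norm_le[OF \<open>gdvd \<alpha> \<gamma>\<close> \<open>\<gamma> \<noteq> 0\<close>], of q] q_deg by simp
  ultimately show ?thesis
    using coeffs \<gamma>(2) by (simp add: mem_principal)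
qed

end
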